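(* Let $\rho$ be a measure on $(0,\infty)$ with $\rho((b,\infty))<\infty$ for all $b>0$. Then $\mathfrak{A}(\rho)$ and $\mathfrak{A}(\mathfrak{A}(\rho))$ are definable and $\mathfrak{A}(\mathfrak{A}(\rho))(\mathrm{d}u)=\rho((u,\infty))\,\mathrm{d}u$. In particular, among measures $\rho$ on $(0,\infty)$ satisfying $\rho((b,\infty))<\infty$ for all $b>0$, $\rho$ is determined by $\mathfrak{A}(\rho)$.
   Context: For a measure $\rho$ on $(0,\infty)$, $\mathfrak{A}(\rho)$ is said to be definable if the function $u\mapsto\int_{(u,\infty)}\pi^{-1/2}(s-u)^{-1/2}\rho(\mathrm{d}s)$ is the Lebesgue density on $(0,\infty)$ of a measure $\sigma$ on $(0,\infty)$ that is locally finite (i.e. $\sigma((b,c))<\infty$ for $0<b<c<\infty$); then $\mathfrak{A}(\rho)$ denotes that measure. *)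

theory Defs
  imports "HOL-Analysis.Analysis"
begin

definition lpos :: "real measure" where
  "lpos = restrict_space lborel {0<..}"

definition abel_fun :: "real measure \<Rightarrow> real \<Rightarrow> ennreal" where
  "abel_fun \<rho> u = (\<integral>\<^sup>+ s. indicator {u<..} s * ennreal (1 / sqrt (pi * (s - u))) \<partial>\<rho>)"

definition abel :: "real measure \<Rightarrow> real measure" where
  "abel \<rho> = density lpos (abel_fun \<rho>)"

definition abel_definable :: "real measure \<Rightarrow> bool" where
  "abel_definable \<rho> \<longleftrightarrow> (\<forall>b c. 0 < b \<longrightarrow> b < c \<longrightarrow> emeasure (abel \<rho>) {b<..<c} < \<infinity>)"

end

theory Submission
  imports Defs
begin

text \<open>The operator \<open>\<AA>\<close> integrates against the kernel \<open>k(x) = 1 / \<surd>(\<pi> x)\<close>, and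
  \<open>\<integral> k(x - a) k(t - x) dx = 1\<close> for \<open>a < t\<close>. By Tonelli, the density of \<open>\<AA>(\<AA>(\<rho>))\<close> at \<open>u\<close>
  is therefore \<open>\<rho>((u, \<infinity>))\<close>. Local finiteness of \<open>\<AA>(\<rho>)\<close> follows from \<open>k \<ge> 1 / \<surd>(\<pi> c)\<close>
  on \<open>(0, c)\<close>, that of \<open>\<AA>(\<AA>(\<rho>))\<close> from the monotonicity of the tail function. The tail
  function, being antitone and right-continuous, is recovered from its integrals over the
  intervals \<open>(u, u + h)\<close>, and the tails determine \<open>\<rho>\<close> because the half-lines \<open>(u, \<infinity>)\<close>
  form an intersection-stable generator.\<close>

definition abel_kernel :: "real \<Rightarrow> ennreal" where
  "abel_kernel x = (if 0 < x then ennreal (1 / sqrt (pi * x)) else 0)"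

lemma abel_kernel_measurable [measurable]: "abel_kernel \<in> borel_measurable borel"
  unfolding abel_kernel_def by measurable

lemma abel_fun_eq_nn_integral_abel_kernel:
  "abel_fun \<mu> u = (\<integral>\<^sup>+ s. abel_kernel (s - u) \<partial>\<mu>)"
  unfolding abel_fun_def abel_kernel_def by (intro nn_integral_cong) (auto simp: indicator_def)

lemma abel_kernel_product_rescaled:
  fixes L y :: real
  assumes "0 < L" "0 < y" "y < 1"
  shows "L * (1 / sqrt (pi * (L * y)) * (1 / sqrt (pi * (L * (1 - y)))))
       = 1 / pi * (y powr (-1/2) * (1 - y) powr (-1/2))"
proof -
  have "y powr (-1/2) = 1 / sqrt y" "(1 - y) powr (-1/2) = 1 / sqrt (1 - y)"
    using assms by (simp_all add: powr_minus_divide powr_half_sqrt)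
  moreover have "sqrt pi * sqrt pi = pi" "sqrt L * sqrt L = L"
    using assms by auto
  ultimately show ?thesis
    using assms by (simp add: real_sqrt_mult divide_simps mult_ac)
qed

text \<open>Rescaling \<open>x = a + (t - a) y\<close> turns this into the Beta integral \<open>B(1/2, 1/2) = \<pi>\<close>.\<close>
lemma nn_integral_abel_kernel_convolution:
  assumes "a < t"
  shows "(\<integral>\<^sup>+ x. abel_kernel (x - a) * abel_kernel (t - x) \<partial>lborel) = 1"
proof -
  define L where "L = t - a"
  have L: "0 < L" using assms by (simp add: L_def)
  have beta: "((\<lambda>y. 1 / pi * (y powr (-1/2) * (1 - y) powr (-1/2))) has_integral 1 / pi * pi) {0..1}"
    using has_integral_Beta_real[of "1/2" "1/2"]
    by (intro has_integral_mult_right) (simp add: Beta_def Gamma_one_half_real)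
  have "(\<integral>\<^sup>+ x. abel_kernel (x - a) * abel_kernel (t - x) \<partial>lborel)
      = ennreal L * (\<integral>\<^sup>+ y. abel_kernel (L * y) * abel_kernel (L * (1 - y)) \<partial>lborel)"
    using nn_integral_real_affine[of "\<lambda>x. abel_kernel (x - a) * abel_kernel (t - x)" L a] L
    by (simp add: L_def algebra_simps)
  also have "\<dots> = (\<integral>\<^sup>+ y. ennreal L * (abel_kernel (L * y) * abel_kernel (L * (1 - y))) \<partial>lborel)"
    by (rule nn_integral_cmult[symmetric]) measurable
  also have "\<dots> = (\<integral>\<^sup>+ y. ennreal (indicator {0..1} y * (1 / pi * (y powr (-1/2) * (1 - y) powr (-1/2)))) \<partial>lborel)"
  proof (intro nn_integral_cong)
    fix y :: real
    show "ennreal L * (abel_kernel (L * y) * abel_kernel (L * (1 - y)))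
        = ennreal (indicator {0..1} y * (1 / pi * (y powr (-1/2) * (1 - y) powr (-1/2))))"
      using L abel_kernel_product_rescaled[OF L, of y]
      by (cases "0 < y \<and> y < 1")
         (auto simp: abel_kernel_def indicator_def ennreal_mult'[symmetric] zero_less_mult_iff not_less)
  qed
  also have "\<dots> = 1"
    using nn_integral_has_integral_lebesgue[OF _ beta] by simp
  finally show ?thesis .
qed

lemma space_lpos: "space lpos = {0<..}"
  by (simp add: lpos_def space_restrict_space)

lemma sets_lpos: "sets lpos = sets (restrict_space borel {0<..})"
  unfolding lpos_def by (rule sets_restrict_space_cong) simp

lemma measurable_ident_lpos [measurable]: "(\<lambda>x. x) \<in> borel_measurable lpos"
  unfolding lpos_def by (rule measurable_restrict_space1) simp

lemma sigma_finite_lpos: "sigma_finite_measure lpos"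
  unfolding lpos_def
  by (rule sigma_finite_measure_restrict_space) (auto simp: lborel.sigma_finite_measure_axioms)

lemma nn_integral_lpos:
  "(\<integral>\<^sup>+ x. f x \<partial>lpos) = (\<integral>\<^sup>+ x. f x * indicator {0<..} x \<partial>lborel)"
  unfolding lpos_def by (rule nn_integral_restrict_space) simp

lemma greaterThanLessThan_in_sets_lpos: "0 \<le> b \<Longrightarrow> {b<..<c} \<in> sets lpos"
  unfolding sets_lpos sets_restrict_space by (auto intro!: image_eqI[where x="{b<..<c}"])

lemma emeasure_lpos_greaterThanLessThan:
  "0 \<le> b \<Longrightarrow> b \<le> c \<Longrightarrow> emeasure lpos {b<..<c} = ennreal (c - b)"
  unfolding lpos_def by (subst emeasure_restrict_space) auto

lemma nn_integral_lpos_const_indicator: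
  "0 \<le> b \<Longrightarrow> b \<le> c \<Longrightarrow> (\<integral>\<^sup>+ x. a * indicator {b<..<c} x \<partial>lpos) = a * ennreal (c - b)"
  by (simp add: nn_integral_cmult_indicator greaterThanLessThan_in_sets_lpos
      emeasure_lpos_greaterThanLessThan)

lemma UN_greaterThan_plus_inverse_Suc: "(\<Union>n. {u + 1 / Suc n<..}) = {u::real<..}"
proof safe
  fix x assume "u < x"
  then obtain n where "1 / Suc n < x - u"
    using reals_Archimedean by (metis diff_gt_0_iff_gt inverse_eq_divide)
  then show "x \<in> (\<Union>n. {u + 1 / Suc n<..})" by (auto simp: algebra_simps)
next
  fix x n assume "u + 1 / Suc n < x"
  moreover have "0 < 1 / real (Suc n)" by simp
  ultimately show "u < x" by linarith
qed

lemma sigma_finite_if_locally_finite: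
  fixes \<nu> :: "real measure"
  assumes sets: "sets \<nu> = sets (restrict_space borel {0<..})"
    and finite: "\<And>b c. 0 < b \<Longrightarrow> b < c \<Longrightarrow> emeasure \<nu> {b<..<c} < \<infinity>"
  shows "sigma_finite_measure \<nu>"
proof
  define A where "A n = {1 / (real n + 2) <..< real n + 2}" for n :: nat
  have A_pos: "0 < 1 / (real n + 2)" "1 / (real n + 2) < real n + 2" for n :: nat
  proof -
    have "1 / (real n + 2) \<le> 1" by simp
    then show "1 / (real n + 2) < real n + 2" by linarith
  qed simp
  have A_pos_subset: "A n \<subseteq> {0<..}" for n
  proof
    fix x assume "x \<in> A n"
    then have "1 / (real n + 2) < x" by (simp add: A_def)
    with A_pos(1)[of n] have "0 < x" by linarith
    then show "x \<in> {0<..}" by simp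
  qed
  have "(\<Union>n. A n) = {0<..}"
  proof
    show "{0<..} \<subseteq> (\<Union>n. A n)"
    proof
      fix x :: real assume "x \<in> {0<..}"
      then have x: "0 < x" by simp
      obtain n :: nat where "x + 1 / x \<le> n" using real_arch_simple by blast
      moreover have "0 < 1 / x" using x by simp
      ultimately have "x < real n + 2" "1 / x < real n + 2" using x by linarith+
      moreover from this(2) have "1 / (real n + 2) < x"
        using x by (simp add: field_simps)
      ultimately show "x \<in> (\<Union>n. A n)" by (auto simp: A_def)
    qed
  qed (use A_pos_subset in blast)
  moreover have "A n \<in> sets \<nu>" for n
  proof -
    have "A n = {0<..} \<inter> A n" using A_pos_subset[of n] by blast
    moreover have "A n \<in> sets borel" by (simp add: A_def)
    ultimately show ?thesis unfolding sets sets_restrict_space by blast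
  qed
  moreover have "emeasure \<nu> (A n) \<noteq> \<infinity>" for n
    using finite[OF A_pos[of n]] by (simp add: A_def)
  ultimately show "\<exists>A. countable A \<and> A \<subseteq> sets \<nu> \<and> \<Union> A = space \<nu> \<and> (\<forall>a\<in>A. emeasure \<nu> a \<noteq> \<infinity>)"
    using sets_eq_imp_space_eq[OF sets]
    by (intro exI[of _ "range A"]) (auto simp: space_restrict_space)
qed

lemma density_cong_space:
  "(\<And>x. x \<in> space M \<Longrightarrow> f x = g x) \<Longrightarrow> density M f = density M g"
  unfolding density_def
  by (intro arg_cong[where f="measure_of (space M) (sets M)"] ext nn_integral_cong) auto

lemma nn_integral_abel_kernel_indicator_le:
  assumes "0 < b" "b < c"
  shows "(\<integral>\<^sup>+ u. abel_kernel (t - u) * indicator {b<..<c} u \<partial>lpos)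
    \<le> ennreal (sqrt (pi * c)) * indicator {b<..} t"
proof (cases "b < t")
  case False
  then have "abel_kernel (t - u) * indicator {b<..<c} u = 0" for u
    by (auto simp: abel_kernel_def indicator_def)
  then show ?thesis by (simp del: mult_eq_0_iff)
next
  case True
  have "abel_kernel (t - u) * indicator {b<..<c} u * indicator {0<..} u
      \<le> ennreal (sqrt (pi * c)) * (abel_kernel (u - 0) * abel_kernel (t - u))" for u
  proof (cases "b < u \<and> u < c")
    case True
    then have u: "0 < u" "u < c" using assms by auto
    then have "1 \<le> sqrt (pi * c) * (1 / sqrt (pi * u))"
      by (simp add: field_simps)
    then have "1 \<le> ennreal (sqrt (pi * c)) * abel_kernel (u - 0)"
      using u by (simp add: abel_kernel_def ennreal_mult'[symmetric] ennreal_leI del: divide_inverse)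
    from mult_right_mono[OF this, of "abel_kernel (t - u)"] show ?thesis
      using True u by (simp add: indicator_def mult.assoc)
  qed (auto simp: indicator_def)
  then have "(\<integral>\<^sup>+ u. abel_kernel (t - u) * indicator {b<..<c} u \<partial>lpos)
      \<le> (\<integral>\<^sup>+ u. ennreal (sqrt (pi * c)) * (abel_kernel (u - 0) * abel_kernel (t - u)) \<partial>lborel)"
    unfolding nn_integral_lpos by (intro nn_integral_mono)
  also have "\<dots> = ennreal (sqrt (pi * c)) * indicator {b<..} t"
    using True assms nn_integral_abel_kernel_convolution[of 0 t]
    by (subst nn_integral_cmult) auto
  finally show ?thesis .
qed

context
  fixes \<mu> :: "real measure"
  assumes sets_\<mu>: "sets \<mu> = sets (restrict_space borel {0<..})"
    and finite_tails: "\<And>b. 0 < b \<Longrightarrow> emeasure \<mu> {b<..} < \<infinity>"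
begin

lemma greaterThan_in_sets: "0 \<le> u \<Longrightarrow> {u<..} \<in> sets \<mu>"
  unfolding sets_\<mu> sets_restrict_space by (auto intro!: image_eqI[where x="{u<..}"])

lemma tail_antimono: "antimono_on {0..} (\<lambda>u. emeasure \<mu> {u<..})"
  by (intro monotone_onI emeasure_mono greaterThan_in_sets) auto

lemma sigma_finite_if_finite_tails: "sigma_finite_measure \<mu>"
proof (rule sigma_finite_if_locally_finite[OF sets_\<mu>])
  fix b c :: real assume "0 < b" "b < c"
  then show "emeasure \<mu> {b<..<c} < \<infinity>"
    using finite_tails[of b] emeasure_mono[of "{b<..<c}" "{b<..}" \<mu>] greaterThan_in_sets[of b]
    by fastforce
qed

interpretation sigma_finite_measure \<mu> by (rule sigma_finite_if_finite_tails)
interpretation L: sigma_finite_measure lpos by (rule sigma_finite_lpos)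
interpretation P: pair_sigma_finite lpos \<mu> ..

lemma measurable_ident_pos [measurable]: "(\<lambda>t. t) \<in> borel_measurable \<mu>"
  by (subst measurable_cong_sets[OF sets_\<mu> refl]) (rule measurable_restrict_space1, simp)

lemma measurable_pair_lpos:
  assumes "g \<in> borel_measurable (borel \<Otimes>\<^sub>M borel)"
  shows "g \<in> borel_measurable (lpos \<Otimes>\<^sub>M \<mu>)"
proof -
  have "(\<lambda>p. (fst p, snd p)) \<in> measurable (lpos \<Otimes>\<^sub>M \<mu>) (borel \<Otimes>\<^sub>M borel)"
    by (intro measurable_Pair measurable_compose[OF measurable_fst measurable_ident_lpos]
        measurable_compose[OF measurable_snd measurable_ident_pos])
  from measurable_compose[OF this assms] show ?thesis by simp
qed

lemma measurable_nn_integral_kernel: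
  assumes "case_prod k \<in> borel_measurable (borel \<Otimes>\<^sub>M borel)"
  shows "(\<lambda>u. \<integral>\<^sup>+ t. k u t \<partial>\<mu>) \<in> borel_measurable lpos"
  by (rule borel_measurable_nn_integral measurable_pair_lpos assms)+

lemma abel_fun_measurable: "abel_fun \<mu> \<in> borel_measurable lpos"
  unfolding abel_fun_eq_nn_integral_abel_kernel[abs_def]
  by (rule measurable_nn_integral_kernel) measurable

lemma tail_measurable: "(\<lambda>u. emeasure \<mu> {u<..}) \<in> borel_measurable lpos"
proof -
  have "(\<lambda>u. \<integral>\<^sup>+ t. indicator {u<..} t \<partial>\<mu>) \<in> borel_measurable lpos"
    by (rule measurable_nn_integral_kernel) (simp add: indicator_def case_prod_beta')
  then show ?thesis
    by (rule measurable_cong[THEN iffD1, rotated]) (simp add: space_lpos greaterThan_in_sets)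
qed

lemma nn_integral_abel_fun_mult:
  assumes g: "g \<in> borel_measurable lpos"
  shows "(\<integral>\<^sup>+ u. abel_fun \<mu> u * g u \<partial>lpos)
    = (\<integral>\<^sup>+ t. \<integral>\<^sup>+ u. abel_kernel (t - u) * g u \<partial>lpos \<partial>\<mu>)"
proof -
  have "(\<lambda>(u, t). abel_kernel (t - u)) \<in> borel_measurable (lpos \<Otimes>\<^sub>M \<mu>)"
    by (rule measurable_pair_lpos) measurable
  moreover have "(\<lambda>(u, t). g u) \<in> borel_measurable (lpos \<Otimes>\<^sub>M \<mu>)"
    using measurable_compose[OF measurable_fst g] by (simp add: case_prod_beta')
  ultimately have "(\<lambda>(u, t). abel_kernel (t - u) * g u) \<in> borel_measurable (lpos \<Otimes>\<^sub>M \<mu>)"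
    by (simp add: case_prod_beta' borel_measurable_times_ennreal)
  moreover have "(\<lambda>t. abel_kernel (t - u)) \<in> borel_measurable \<mu>" for u
    by measurable
  ultimately show ?thesis
    unfolding abel_fun_eq_nn_integral_abel_kernel
    by (simp add: nn_integral_multc[symmetric] P.Fubini')
qed

lemma abel_fun_abel:
  assumes "0 < u"
  shows "abel_fun (abel \<mu>) u = emeasure \<mu> {u<..}"
proof -
  have "abel_fun (abel \<mu>) u = (\<integral>\<^sup>+ s. abel_fun \<mu> s * abel_kernel (s - u) \<partial>lpos)"
    unfolding abel_def abel_fun_eq_nn_integral_abel_kernel[of "density lpos (abel_fun \<mu>)"]
    by (intro nn_integral_density abel_fun_measurable) measurable
  also have "\<dots> = (\<integral>\<^sup>+ t. \<integral>\<^sup>+ s. abel_kernel (t - s) * abel_kernel (s - u) \<partial>lpos \<partial>\<mu>)"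
    by (rule nn_integral_abel_fun_mult) measurable
  also have "\<dots> = (\<integral>\<^sup>+ t. indicator {u<..} t \<partial>\<mu>)"
  proof (rule nn_integral_cong)
    fix t
    have "(\<integral>\<^sup>+ s. abel_kernel (t - s) * abel_kernel (s - u) \<partial>lpos)
        = (\<integral>\<^sup>+ s. abel_kernel (s - u) * abel_kernel (t - s) \<partial>lborel)"
      unfolding nn_integral_lpos
      using assms by (intro nn_integral_cong) (auto simp: abel_kernel_def indicator_def mult.commute)
    also have "\<dots> = indicator {u<..} t"
    proof (cases "u < t")
      case False
      then have "abel_kernel (s - u) * abel_kernel (t - s) = 0" for s
        by (auto simp: abel_kernel_def)
      then show ?thesis using False by (simp del: mult_eq_0_iff)
    qed (simp add: nn_integral_abel_kernel_convolution)
    finally show "(\<integral>\<^sup>+ s. abel_kernel (t - s) * abel_kernel (s - u) \<partial>lpos) = indicator {u<..} t" .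
  qed
  also have "\<dots> = emeasure \<mu> {u<..}"
    using assms by (simp add: greaterThan_in_sets)
  finally show ?thesis .
qed

lemma abel_abel: "abel (abel \<mu>) = density lpos (\<lambda>u. emeasure \<mu> {u<..})"
  unfolding abel_def[of "abel \<mu>"]
  by (rule density_cong_space) (simp add: space_lpos abel_fun_abel)

lemma abel_definable_if_finite_tails: "abel_definable \<mu>"
  unfolding abel_definable_def
proof (intro allI impI)
  fix b c :: real assume bc: "0 < b" "b < c"
  have "emeasure (abel \<mu>) {b<..<c} = (\<integral>\<^sup>+ u. abel_fun \<mu> u * indicator {b<..<c} u \<partial>lpos)"
    unfolding abel_def using bc
    by (intro emeasure_density abel_fun_measurable greaterThanLessThan_in_sets_lpos) simp
  also have "\<dots> = (\<integral>\<^sup>+ t. \<integral>\<^sup>+ u. abel_kernel (t - u) * indicator {b<..<c} u \<partial>lpos \<partial>\<mu>)"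
    using bc by (intro nn_integral_abel_fun_mult borel_measurable_indicator
        greaterThanLessThan_in_sets_lpos) simp
  also have "\<dots> \<le> (\<integral>\<^sup>+ t. ennreal (sqrt (pi * c)) * indicator {b<..} t \<partial>\<mu>)"
    by (intro nn_integral_mono nn_integral_abel_kernel_indicator_le bc)
  also have "\<dots> = ennreal (sqrt (pi * c)) * emeasure \<mu> {b<..}"
    using bc by (intro nn_integral_cmult_indicator greaterThan_in_sets) simp
  also have "\<dots> < \<infinity>"
    using finite_tails[OF bc(1)] by (simp add: ennreal_mult_less_top)
  finally show "emeasure (abel \<mu>) {b<..<c} < \<infinity>" .
qed

lemma abel_definable_abel_if_finite_tails: "abel_definable (abel \<mu>)"
  unfolding abel_definable_def abel_abel
proof (intro allI impI)
  fix b c :: real assume bc: "0 < b" "b < c"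
  have "emeasure (density lpos (\<lambda>u. emeasure \<mu> {u<..})) {b<..<c}
      = (\<integral>\<^sup>+ u. emeasure \<mu> {u<..} * indicator {b<..<c} u \<partial>lpos)"
    using bc by (intro emeasure_density tail_measurable greaterThanLessThan_in_sets_lpos) simp
  also have "\<dots> \<le> (\<integral>\<^sup>+ u. emeasure \<mu> {b<..} * indicator {b<..<c} u \<partial>lpos)"
    using bc monotone_onD[OF tail_antimono]
    by (intro nn_integral_mono) (auto simp: indicator_def)
  also have "\<dots> = emeasure \<mu> {b<..} * ennreal (c - b)"
    using bc by (simp add: nn_integral_lpos_const_indicator)
  also have "\<dots> < \<infinity>"
    using finite_tails[OF bc(1)] by (simp add: ennreal_mult_less_top)
  finally show "emeasure (density lpos (\<lambda>u. emeasure \<mu> {u<..})) {b<..<c} < \<infinity>" .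
qed

lemma tail_eq_SUP:
  assumes "0 \<le> u"
  shows "emeasure \<mu> {u<..} = (SUP n. emeasure \<mu> {u + 1 / Suc n<..})"
proof -
  have "(SUP n. emeasure \<mu> {u + 1 / Suc n<..}) = emeasure \<mu> (\<Union>n. {u + 1 / Suc n<..})"
  proof (rule SUP_emeasure_incseq)
    show "range (\<lambda>n. {u + 1 / real (Suc n)<..}) \<subseteq> sets \<mu>"
      using assms by (auto intro!: greaterThan_in_sets add_nonneg_nonneg simp del: of_nat_Suc)
    show "incseq (\<lambda>n. {u + 1 / real (Suc n)<..})"
      by (auto simp: incseq_def frac_le simp del: of_nat_Suc intro!: order.strict_trans1[rotated])
  qed
  then show ?thesis unfolding UN_greaterThan_plus_inverse_Suc by simp
qed

end

text \<open>The mean of an antitone function over \<open>(u, u + h)\<close> lies between its values at the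
  endpoints, and is determined by the density measure.\<close>
lemma antitone_le_if_density_lpos_eq:
  fixes F G :: "real \<Rightarrow> ennreal"
  assumes F: "F \<in> borel_measurable lpos" "antimono_on {0..} F"
    and G: "G \<in> borel_measurable lpos" "antimono_on {0..} G"
    and eq: "density lpos F = density lpos G"
    and "0 \<le> u" "0 < h"
  shows "F (u + h) \<le> G u"
proof -
  have "ennreal h * F (u + h) = (\<integral>\<^sup>+ x. F (u + h) * indicator {u<..<u + h} x \<partial>lpos)"
    using assms by (simp add: nn_integral_lpos_const_indicator mult.commute)
  also have "\<dots> \<le> (\<integral>\<^sup>+ x. F x * indicator {u<..<u + h} x \<partial>lpos)"
    using assms monotone_onD[OF F(2)] by (intro nn_integral_mono) (auto simp: indicator_def)
  also have "\<dots> = emeasure (density lpos F) {u<..<u + h}"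
    using assms by (intro emeasure_density[symmetric] greaterThanLessThan_in_sets_lpos)
  also have "\<dots> = (\<integral>\<^sup>+ x. G x * indicator {u<..<u + h} x \<partial>lpos)"
    unfolding eq using assms by (intro emeasure_density greaterThanLessThan_in_sets_lpos)
  also have "\<dots> \<le> (\<integral>\<^sup>+ x. G u * indicator {u<..<u + h} x \<partial>lpos)"
    using assms monotone_onD[OF G(2)] by (intro nn_integral_mono) (auto simp: indicator_def)
  also have "\<dots> = ennreal h * G u"
    using assms by (simp add: nn_integral_lpos_const_indicator mult.commute)
  finally show ?thesis
    using \<open>0 < h\<close> by (simp add: ennreal_mult_le_mult_iff)
qed

lemma tail_le_if_abel_eq:
  fixes \<mu> \<nu> :: "real measure"
  assumes \<mu>: "sets \<mu> = sets (restrict_space borel {0<..})" "\<And>b. 0 < b \<Longrightarrow> emeasure \<mu> {b<..} < \<infinity>"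
    and \<nu>: "sets \<nu> = sets (restrict_space borel {0<..})" "\<And>b. 0 < b \<Longrightarrow> emeasure \<nu> {b<..} < \<infinity>"
    and eq: "abel \<mu> = abel \<nu>"
    and "0 \<le> u"
  shows "emeasure \<mu> {u<..} \<le> emeasure \<nu> {u<..}"
proof -
  have "emeasure \<mu> {u + 1 / Suc n<..} \<le> emeasure \<nu> {u<..}" for n
    using abel_abel[OF \<mu>] abel_abel[OF \<nu>] eq \<open>0 \<le> u\<close>
    by (intro antitone_le_if_density_lpos_eq tail_measurable tail_antimono \<mu> \<nu>) auto
  then show ?thesis
    using tail_eq_SUP[OF \<mu> \<open>0 \<le> u\<close>] by (simp add: SUP_least)
qed

lemma sets_restrict_borel_greaterThan_0:
  "sets (restrict_space borel {0<..}) = sigma_sets {0<..} (greaterThan ` {0::real..})"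
proof -
  have borel: "sets (borel :: real measure) = sigma_sets UNIV (range greaterThan)"
    by (subst borel_Ioi) simp
  have "{0<..} \<in> sigma_sets UNIV (range greaterThan :: real set set)"
    by auto
  from sigma_sets_Int[OF this]
  have "sets (restrict_space borel {0<..}) = sigma_sets {0<..} ((\<inter>) {0::real<..} ` range greaterThan)"
    unfolding sets_restrict_space borel by simp
  also have "(\<inter>) {0<..} ` range greaterThan = greaterThan ` {0::real..}"
  proof safe
    fix a :: real
    show "{0<..} \<inter> {a<..} \<in> greaterThan ` {0..}"
      by (intro image_eqI[of _ _ "max 0 a"]) auto
  next
    fix a :: real assume "0 \<le> a"
    then show "{a<..} \<in> (\<inter>) {0<..} ` range greaterThan"
      by (intro image_eqI[of _ _ "{a<..}"]) auto
  qed
  finally show ?thesis .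
qed

lemma measure_eqI_greaterThan_pos:
  fixes \<mu> \<nu> :: "real measure"
  assumes sets: "sets \<mu> = sets (restrict_space borel {0<..})" "sets \<nu> = sets (restrict_space borel {0<..})"
    and finite: "\<And>b. 0 < b \<Longrightarrow> emeasure \<mu> {b<..} < \<infinity>"
    and eq: "\<And>u. 0 \<le> u \<Longrightarrow> emeasure \<mu> {u<..} = emeasure \<nu> {u<..}"
  shows "\<mu> = \<nu>"
proof (rule measure_eqI_generator_eq_countable[where A="range (\<lambda>n. {1 / Suc n<..})"])
  show "Int_stable (greaterThan ` {0::real..})"
  proof (rule Int_stableI)
    fix A B assume "A \<in> greaterThan ` {0::real..}" "B \<in> greaterThan ` {0::real..}"
    then obtain a b :: real where "0 \<le> a" "A = {a<..}" "0 \<le> b" "B = {b<..}" by auto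
    then show "A \<inter> B \<in> greaterThan ` {0..}"
      by (intro image_eqI[of _ _ "max a b"]) auto
  qed
  show "(\<Union> (range (\<lambda>n. {1 / Suc n<..}))) = {0::real<..}"
    using UN_greaterThan_plus_inverse_Suc[of 0] by simp
  show "emeasure \<mu> A \<noteq> \<infinity>" if A: "A \<in> range (\<lambda>n. {1 / Suc n<..})" for A
  proof -
    obtain n where "A = {1 / Suc n<..}" using A by blast
    then show ?thesis using finite[of "1 / Suc n"] by (simp del: of_nat_Suc)
  qed
qed (use sets eq in
      \<open>auto simp: sets_restrict_borel_greaterThan_0 simp del: of_nat_Suc\<close>)

lemma eq_if_abel_eq:
  fixes \<mu> \<nu> :: "real measure"
  assumes \<mu>: "sets \<mu> = sets (restrict_space borel {0<..})" "\<And>b. 0 < b \<Longrightarrow> emeasure \<mu> {b<..} < \<infinity>"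
    and \<nu>: "sets \<nu> = sets (restrict_space borel {0<..})" "\<And>b. 0 < b \<Longrightarrow> emeasure \<nu> {b<..} < \<infinity>"
    and eq: "abel \<mu> = abel \<nu>"
  shows "\<mu> = \<nu>"
proof (rule measure_eqI_greaterThan_pos[OF \<mu>(1) \<nu>(1) \<mu>(2)])
  fix u :: real assume "0 \<le> u"
  then show "emeasure \<mu> {u<..} = emeasure \<nu> {u<..}"
    using tail_le_if_abel_eq[OF \<mu> \<nu> eq] tail_le_if_abel_eq[OF \<nu> \<mu> eq[symmetric]]
    by (auto intro: antisym)
qed

theorem lemma2p8:
  fixes \<rho> :: "real measure"
  assumes "sets \<rho> = sets (restrict_space borel {0<..})"
    and "\<And>b. b > 0 \<Longrightarrow> emeasure \<rho> {b<..} < \<infinity>"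
  shows "abel_definable \<rho> \<and> abel_definable (abel \<rho>)
    \<and> abel (abel \<rho>) = density lpos (\<lambda>u. emeasure \<rho> {u<..})
    \<and> (\<forall>\<rho>'. sets \<rho>' = sets (restrict_space borel {0<..})
          \<longrightarrow> (\<forall>b>0. emeasure \<rho>' {b<..} < \<infinity>)
          \<longrightarrow> abel \<rho>' = abel \<rho> \<longrightarrow> \<rho>' = \<rho>)"
  using abel_definable_if_finite_tails[OF assms] abel_definable_abel_if_finite_tails[OF assms]
    abel_abel[OF assms] eq_if_abel_eq[OF _ _ assms]
  by blast

end
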